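(* Let $m,n,k$ be positive integers, $A\in\mathbb{R}^{m\times n}$ satisfying the $(2k+1)$-RIP with $\|A_i\|_2=1$ for every column $A_i$, $x^*\in\mathbb{R}^n$ with support $S^*$, $|S^*|\le k$, $e\in\mathbb{R}^m$, $y=Ax^*+e$. For every initialization $\mathcal{X}^0$, every $\eta>0$ and every $t\in\mathbb{N}$, the SEA iterates satisfy $$\left\|\frac{u^t}{\eta}-A^T(Ax^t-y)\right\|_\infty=\frac1\eta\|b^t\|_\infty\le\alpha_k^{RIP}\|x^*\|_2+\gamma_k^{RIP}\|e\|_2,$$ where $b^t=u^t-\eta A^T(Ax^t-y)$.
   Context: For $l\in\{1,\dots,n\}$, the restricted isometry constant $\delta_l$ of $A$ is the smallest $\delta\ge0$ such that $(1-\delta)\|x\|_2^2\le\|Ax\|_2^2\le(1+\delta)\|x\|_2^2$ for all $x$ with at most $l$ nonzero entries; $A$ satisfies the $l$-RIP if $\delta_l<1$. $\alpha_k^{RIP}=\delta_{2k+1}\left(1+\frac{\delta_{2k}}{1-\delta_k}\right)$ and $\gamma_k^{RIP}=1+\frac{\delta_{2k+1}\sqrt{1+\delta_k}}{1-\delta_k}$. $S^*=\{i:x^*_i\neq0\}$. For $v\in\mathbb{R}^n$, $\mathrm{largest}_k(v)$ is the set of indices of the $k$ entries of $v$ with largest absolute value (ties broken by selecting the highest indices). For $S\subseteq\{1,\dots,n\}$, $A_S$ is the submatrix of columns indexed by $S$, $v_S$ the restriction of a vector to $S$, $A_S^\dagger$ the Moore–Penrose pseudoinverse of $A_S$. SEA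 with initialization $\mathcal{X}^0$ and step size $\eta$ generates, for $t=0,1,2,\dots$: $S^t=\mathrm{largest}_k(\mathcal{X}^t)$; $x^t_i=0$ for $i\notin S^t$ and $x^t_{S^t}=A_{S^t}^\dagger y$; $\mathcal{X}^{t+1}=\mathcal{X}^t-\eta A^T(Ax^t-y)$. The oracle direction is $u^t_i=-\eta x^*_i$ if $i\in S^*\setminus S^t$ and $u^t_i=0$ otherwise. *)

theory Defs
  imports Complex_Main
begin

text \<open>Conventions: indices are 0-based. A vector in R^n is a function nat => real,
  only its values on {..<n} matter; an m x n matrix is a function nat => nat => real,
  only its values on {..<m} x {..<n} matter.\<close>

definition mat_vec :: "nat \<Rightarrow> (nat \<Rightarrow> nat \<Rightarrow> real) \<Rightarrow> (nat \<Rightarrow> real) \<Rightarrow> nat \<Rightarrow> real" where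
  "mat_vec n A x = (\<lambda>i. \<Sum>j<n. A i j * x j)"

definition tmat_vec :: "nat \<Rightarrow> (nat \<Rightarrow> nat \<Rightarrow> real) \<Rightarrow> (nat \<Rightarrow> real) \<Rightarrow> nat \<Rightarrow> real" where
  "tmat_vec m A r = (\<lambda>j. \<Sum>i<m. A i j * r i)"

definition norm2 :: "nat \<Rightarrow> (nat \<Rightarrow> real) \<Rightarrow> real" where
  "norm2 n x = sqrt (\<Sum>i<n. (x i)\<^sup>2)"

definition norm_inf :: "nat \<Rightarrow> (nat \<Rightarrow> real) \<Rightarrow> real" where
  "norm_inf n x = Max ((\<lambda>i. \<bar>x i\<bar>) ` {..<n})"

definition sparse :: "nat \<Rightarrow> nat \<Rightarrow> (nat \<Rightarrow> real) \<Rightarrow> bool" where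
  "sparse n l x \<longleftrightarrow> card {i. i < n \<and> x i \<noteq> 0} \<le> l"

definition rip_const :: "nat \<Rightarrow> nat \<Rightarrow> (nat \<Rightarrow> nat \<Rightarrow> real) \<Rightarrow> nat \<Rightarrow> real" where
  "rip_const m n A l = Inf {\<delta>. \<delta> \<ge> 0 \<and> (\<forall>x. sparse n l x \<longrightarrow>
      (1 - \<delta>) * (norm2 n x)\<^sup>2 \<le> (norm2 m (mat_vec n A x))\<^sup>2 \<and>
      (norm2 m (mat_vec n A x))\<^sup>2 \<le> (1 + \<delta>) * (norm2 n x)\<^sup>2)}"

definition alpha_rip :: "nat \<Rightarrow> nat \<Rightarrow> (nat \<Rightarrow> nat \<Rightarrow> real) \<Rightarrow> nat \<Rightarrow> real" where
  "alpha_rip m n A k = rip_const m n A (2*k+1) *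
     (1 + rip_const m n A (2*k) / (1 - rip_const m n A k))"

definition gamma_rip :: "nat \<Rightarrow> nat \<Rightarrow> (nat \<Rightarrow> nat \<Rightarrow> real) \<Rightarrow> nat \<Rightarrow> real" where
  "gamma_rip m n A k = 1 + rip_const m n A (2*k+1) * sqrt (1 + rip_const m n A k)
     / (1 - rip_const m n A k)"

text \<open>largest_k(v): indices of the k entries of largest absolute value, ties broken by
  selecting the highest indices: i is selected iff fewer than k indices j precede it in
  the lexicographic order on (|v j|, j).\<close>
definition largest :: "nat \<Rightarrow> nat \<Rightarrow> (nat \<Rightarrow> real) \<Rightarrow> nat set" where
  "largest n k v = {i. i < n \<and>
     card {j. j < n \<and> (\<bar>v j\<bar> > \<bar>v i\<bar> \<or> (\<bar>v j\<bar> = \<bar>v i\<bar> \<and> j > i))} < k}"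

text \<open>Moore--Penrose pseudoinverse of the submatrix A_S (rows {..<m}, columns S), given by
  the four Penrose conditions; the result is indexed by S x {..<m} (zero elsewhere).\<close>
definition penrose :: "nat \<Rightarrow> nat set \<Rightarrow> (nat \<Rightarrow> nat \<Rightarrow> real) \<Rightarrow> (nat \<Rightarrow> nat \<Rightarrow> real) \<Rightarrow> bool" where
  "penrose m S M X \<longleftrightarrow>
     (\<forall>i j. \<not> (i \<in> S \<and> j < m) \<longrightarrow> X i j = 0) \<and>
     (\<forall>i<m. \<forall>j\<in>S. (\<Sum>l\<in>S. \<Sum>r<m. M i l * X l r * M r j) = M i j) \<and>
     (\<forall>i\<in>S. \<forall>j<m. (\<Sum>r<m. \<Sum>l\<in>S. X i r * M r l * X l j) = X i j) \<and>
     (\<forall>i<m. \<forall>j<m. (\<Sum>l\<in>S. M i l * X l j) = (\<Sum>l\<in>S. M j l * X l i)) \<and>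
     (\<forall>i\<in>S. \<forall>j\<in>S. (\<Sum>r<m. X i r * M r j) = (\<Sum>r<m. X j r * M r i))"

definition pinv :: "nat \<Rightarrow> nat set \<Rightarrow> (nat \<Rightarrow> nat \<Rightarrow> real) \<Rightarrow> nat \<Rightarrow> nat \<Rightarrow> real" where
  "pinv m S M = (THE X. penrose m S M X)"

definition ls_on :: "nat \<Rightarrow> (nat \<Rightarrow> nat \<Rightarrow> real) \<Rightarrow> nat set \<Rightarrow> (nat \<Rightarrow> real) \<Rightarrow> nat \<Rightarrow> real" where
  "ls_on m A S y = (\<lambda>i. if i \<in> S then (\<Sum>r<m. pinv m S A i r * y r) else 0)"

definition sea_S :: "nat \<Rightarrow> nat \<Rightarrow> (nat \<Rightarrow> real) \<Rightarrow> nat set" where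
  "sea_S n k X = largest n k X"

definition sea_x :: "nat \<Rightarrow> nat \<Rightarrow> (nat \<Rightarrow> nat \<Rightarrow> real) \<Rightarrow> nat \<Rightarrow> (nat \<Rightarrow> real) \<Rightarrow> (nat \<Rightarrow> real) \<Rightarrow> nat \<Rightarrow> real" where
  "sea_x m n A k y X = ls_on m A (sea_S n k X) y"

fun sea_X :: "nat \<Rightarrow> nat \<Rightarrow> (nat \<Rightarrow> nat \<Rightarrow> real) \<Rightarrow> nat \<Rightarrow> (nat \<Rightarrow> real) \<Rightarrow> (nat \<Rightarrow> real) \<Rightarrow> real \<Rightarrow> nat \<Rightarrow> nat \<Rightarrow> real" where
  "sea_X m n A k y X0 \<eta> 0 = X0"
| "sea_X m n A k y X0 \<eta> (Suc t) =
     (let X = sea_X m n A k y X0 \<eta> t; x = sea_x m n A k y X;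
          g = tmat_vec m A (\<lambda>i. mat_vec n A x i - y i)
      in (\<lambda>i. X i - \<eta> * g i))"

definition oracle_u :: "real \<Rightarrow> (nat \<Rightarrow> real) \<Rightarrow> nat set \<Rightarrow> nat \<Rightarrow> real" where
  "oracle_u \<eta> xs St = (\<lambda>i. if i \<in> {j. xs j \<noteq> 0} - St then - \<eta> * xs i else 0)"

end

theory Submission
  imports Defs "HOL-Analysis.Convex"
begin

(* Fix t and write S = S^t, x = x^t and r = A x - y. The RIP makes the columns of A indexed
   by S linearly independent, so the Penrose conditions determine A_S^dagger uniquely and x_S
   is the least-squares solution: A_S^T r = 0, hence both u^t and A^T r vanish on S.
   Off S the entry of u^t/eta - A^T r is -x*_i - <A_i, r>. Splitting x - x* = w - z with w
   supported on S and z the part of x* outside S gives r = A w - A z - e. Testing r against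
   A w and using the orthogonality yields
     (1 - delta_k) |w| <= delta_2k |z| + sqrt (1 + delta_k) |e|,
   while the inner-product form of the RIP, |<A u, A v> - <u, v>| <= delta_l |u| |v| for
   jointly l-sparse u and v, applied with u the i-th unit vector, bounds the entry by
   delta_(2k+1) (|w| + |z|) + |e|. As |z| <= |x*|, the two estimates combine to
   alpha_k |x*| + gamma_k |e|. *)

section \<open>Vectors indexed by an initial segment\<close>

definition dotp :: "nat \<Rightarrow> (nat \<Rightarrow> real) \<Rightarrow> (nat \<Rightarrow> real) \<Rightarrow> real" where
  "dotp N u v = (\<Sum>i<N. u i * v i)"

lemma dotp_commute: "dotp N u v = dotp N v u"
  unfolding dotp_def by (simp add: mult.commute)

lemma dotp_diff_left: "dotp N (\<lambda>i. a i - b i) v = dotp N a v - dotp N b v"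
  unfolding dotp_def by (simp add: left_diff_distrib sum_subtractf)

lemma dotp_scale_left: "dotp N (\<lambda>i. c * a i) v = c * dotp N a v"
  unfolding dotp_def by (simp add: sum_distrib_left mult.assoc)

lemma dotp_scale_right: "dotp N v (\<lambda>i. c * a i) = c * dotp N v a"
  using dotp_scale_left[of N c a v] by (simp add: dotp_commute)

lemma dotp_add_self:
  "dotp N (\<lambda>i. a i + b i) (\<lambda>i. a i + b i) = dotp N a a + 2 * dotp N a b + dotp N b b"
  unfolding dotp_def by (simp add: sum.distrib sum_distrib_left algebra_simps)

lemma dotp_diff_self:
  "dotp N (\<lambda>i. a i - b i) (\<lambda>i. a i - b i) = dotp N a a - 2 * dotp N a b + dotp N b b"
  unfolding dotp_def by (simp add: sum.distrib sum_subtractf sum_distrib_left algebra_simps)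

lemma dotp_self_nonneg: "dotp N u u \<ge> 0"
  unfolding dotp_def by (auto intro: sum_nonneg)

lemma dotp_self_eq_0_iff: "dotp N u u = 0 \<longleftrightarrow> (\<forall>i<N. u i = 0)"
  unfolding dotp_def by (auto simp: sum_nonneg_eq_0_iff)

lemma dotp_eq_0_if_left_0: "\<forall>i<N. u i = 0 \<Longrightarrow> dotp N u v = 0"
  unfolding dotp_def by simp

lemma norm2_eq_sqrt_dotp: "norm2 N u = sqrt (dotp N u u)"
  unfolding norm2_def dotp_def by (simp add: power2_eq_square)

lemma norm2_square: "(norm2 N u)\<^sup>2 = dotp N u u"
  by (simp add: norm2_eq_sqrt_dotp dotp_self_nonneg)

lemma norm2_nonneg: "norm2 N u \<ge> 0"
  by (simp add: norm2_eq_sqrt_dotp dotp_self_nonneg)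

lemma norm2_mono: "\<forall>i<N. \<bar>u i\<bar> \<le> \<bar>v i\<bar> \<Longrightarrow> norm2 N u \<le> norm2 N v"
  unfolding norm2_def by (auto intro!: real_sqrt_le_mono sum_mono simp: abs_le_square_iff)

lemma abs_dotp_le_norm2: "\<bar>dotp N u v\<bar> \<le> norm2 N u * norm2 N v"
proof -
  have "(dotp N u v)\<^sup>2 \<le> dotp N u u * dotp N v v"
    unfolding dotp_def using Cauchy_Schwarz_ineq_sum[of u v "{..<N}"]
    by (simp add: power2_eq_square)
  then show ?thesis
    by (metis norm2_eq_sqrt_dotp real_sqrt_abs real_sqrt_le_mono real_sqrt_mult)
qed

lemma mat_vec_add: "mat_vec n A (\<lambda>j. u j + v j) = (\<lambda>i. mat_vec n A u i + mat_vec n A v i)"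
  unfolding mat_vec_def by (simp add: distrib_left sum.distrib)

lemma mat_vec_diff: "mat_vec n A (\<lambda>j. u j - v j) = (\<lambda>i. mat_vec n A u i - mat_vec n A v i)"
  unfolding mat_vec_def by (simp add: right_diff_distrib sum_subtractf)

lemma mat_vec_scale: "mat_vec n A (\<lambda>j. c * u j) = (\<lambda>i. c * mat_vec n A u i)"
  unfolding mat_vec_def by (simp add: sum_distrib_left algebra_simps)

lemma mat_vec_eq_0: "\<forall>j<n. u j = 0 \<Longrightarrow> mat_vec n A u i = 0"
  unfolding mat_vec_def by simp

lemma dotp_mat_vec_left: "dotp m (mat_vec n A u) w = dotp n u (tmat_vec m A w)"
  unfolding dotp_def mat_vec_def tmat_vec_def
  by (simp add: sum_distrib_left sum_distrib_right sum.swap[of _ "{..<m}"] algebra_simps)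

lemma norm_inf_scale:
  assumes "0 < n" "0 \<le> c"
  shows "norm_inf n (\<lambda>i. c * v i) = c * norm_inf n v"
proof -
  have "mono (\<lambda>t::real. c * t)" using assms(2) by (intro monoI mult_left_mono)
  moreover have "(\<lambda>i. \<bar>v i\<bar>) ` {..<n} \<noteq> {}" using assms(1) by auto
  ultimately have "c * norm_inf n v = Max ((\<lambda>t. c * t) ` (\<lambda>i. \<bar>v i\<bar>) ` {..<n})"
    unfolding norm_inf_def by (simp add: mono_Max_commute)
  then show ?thesis unfolding norm_inf_def abs_mult using assms(2) by (simp add: image_image)
qed

lemma norm_inf_le: "0 < n \<Longrightarrow> \<forall>i<n. \<bar>v i\<bar> \<le> B \<Longrightarrow> norm_inf n v \<le> B"
  unfolding norm_inf_def by (subst Max_le_iff) auto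

lemma sparse_if_support:
  assumes "finite U" "card U \<le> l" "\<forall>j. j \<notin> U \<longrightarrow> u j = 0"
  shows "sparse n l u"
  unfolding sparse_def
proof -
  have "{i. i < n \<and> u i \<noteq> 0} \<subseteq> U" using assms(3) by blast
  then show "card {i. i < n \<and> u i \<noteq> 0} \<le> l" using assms(1,2) by (meson card_mono le_trans)
qed

lemma card_joint_support_le:
  assumes "finite U" "finite V" "\<forall>j. j \<notin> U \<longrightarrow> u j = 0" "\<forall>j. j \<notin> V \<longrightarrow> v j = 0"
  shows "card {j. j < n \<and> (u j \<noteq> 0 \<or> v j \<noteq> 0)} \<le> card U + card V"
proof -
  have "card {j. j < n \<and> (u j \<noteq> 0 \<or> v j \<noteq> 0)} \<le> card (U \<union> V)"
    using assms by (intro card_mono) auto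
  also have "\<dots> \<le> card U + card V" by (rule card_Un_le)
  finally show ?thesis .
qed

lemma finite_nonzero_if_zero_beyond:
  fixes v :: "nat \<Rightarrow> real"
  assumes "\<forall>i\<ge>n. v i = 0"
  shows "finite {i. v i \<noteq> 0}"
proof (rule finite_subset)
  show "{i. v i \<noteq> 0} \<subseteq> {..<n}"
    using assms by (auto simp: not_less[symmetric] intro: ccontr)
qed simp

section \<open>Restricted isometry constants\<close>

definition rip_admissible :: "nat \<Rightarrow> nat \<Rightarrow> (nat \<Rightarrow> nat \<Rightarrow> real) \<Rightarrow> nat \<Rightarrow> real set" where
  "rip_admissible m n A l = {\<delta>. \<delta> \<ge> 0 \<and> (\<forall>x. sparse n l x \<longrightarrow>
      (1 - \<delta>) * (norm2 n x)\<^sup>2 \<le> (norm2 m (mat_vec n A x))\<^sup>2 \<and>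
      (norm2 m (mat_vec n A x))\<^sup>2 \<le> (1 + \<delta>) * (norm2 n x)\<^sup>2)}"

lemma rip_const_eq_Inf: "rip_const m n A l = Inf (rip_admissible m n A l)"
  unfolding rip_const_def rip_admissible_def ..

lemma dotp_mat_vec_self_le:
  "dotp m (mat_vec n A x) (mat_vec n A x) \<le> (\<Sum>r<m. \<Sum>j<n. (A r j)\<^sup>2) * dotp n x x"
proof -
  have "dotp m (mat_vec n A x) (mat_vec n A x) = (\<Sum>r<m. (\<Sum>j<n. A r j * x j)\<^sup>2)"
    unfolding dotp_def mat_vec_def by (simp add: power2_eq_square)
  also have "\<dots> \<le> (\<Sum>r<m. (\<Sum>j<n. (A r j)\<^sup>2) * (\<Sum>j<n. (x j)\<^sup>2))"
    by (intro sum_mono Cauchy_Schwarz_ineq_sum)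
  also have "\<dots> = (\<Sum>r<m. \<Sum>j<n. (A r j)\<^sup>2) * dotp n x x"
    unfolding dotp_def by (simp add: sum_distrib_right power2_eq_square)
  finally show ?thesis .
qed

lemma rip_admissible_nonempty: "rip_admissible m n A l \<noteq> {}"
proof -
  define F where "F = (\<Sum>r<m. \<Sum>j<n. (A r j)\<^sup>2)"
  have F: "F \<ge> 0" unfolding F_def by (simp add: sum_nonneg)
  have "F + 1 \<in> rip_admissible m n A l"
    unfolding rip_admissible_def norm2_square
  proof (intro CollectI conjI allI impI)
    fix x
    have "0 \<le> F * dotp n x x" using F dotp_self_nonneg by simp
    then show "(1 - (F + 1)) * dotp n x x \<le> dotp m (mat_vec n A x) (mat_vec n A x)"
      using dotp_self_nonneg[of m "mat_vec n A x"] by simp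
    show "dotp m (mat_vec n A x) (mat_vec n A x) \<le> (1 + (F + 1)) * dotp n x x"
      using dotp_mat_vec_self_le[of m n A x] dotp_self_nonneg[of n x] unfolding F_def[symmetric]
      by (simp add: algebra_simps)
  qed (use F in simp)
  then show ?thesis by blast
qed

lemma rip_const_nonneg: "rip_const m n A l \<ge> 0"
  unfolding rip_const_eq_Inf using rip_admissible_nonempty
  by (intro cInf_greatest) (auto simp: rip_admissible_def)

lemma rip_const_mono: "l \<le> l' \<Longrightarrow> rip_const m n A l \<le> rip_const m n A l'"
  unfolding rip_const_eq_Inf using rip_admissible_nonempty
  by (intro cInf_superset_mono)
     (auto simp: rip_admissible_def sparse_def intro: bdd_belowI[of _ 0])

lemma rip_const_bounds:
  assumes "sparse n l x"
  shows "(1 - rip_const m n A l) * dotp n x x \<le> dotp m (mat_vec n A x) (mat_vec n A x)"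
    and "dotp m (mat_vec n A x) (mat_vec n A x) \<le> (1 + rip_const m n A l) * dotp n x x"
proof -
  let ?a = "dotp n x x" and ?b = "dotp m (mat_vec n A x) (mat_vec n A x)"
  have adm: "(1 - d) * ?a \<le> ?b \<and> ?b \<le> (1 + d) * ?a" if "d \<in> rip_admissible m n A l" for d
    using that assms unfolding rip_admissible_def norm2_square by auto
  have "(1 - rip_const m n A l) * ?a \<le> ?b \<and> ?b \<le> (1 + rip_const m n A l) * ?a"
  proof (cases "?a = 0")
    case True
    then show ?thesis using adm rip_admissible_nonempty by fastforce
  next
    case False
    then have "?a > 0" using dotp_self_nonneg[of n x] by simp
    then have "\<bar>?b / ?a - 1\<bar> \<le> d" if "d \<in> rip_admissible m n A l" for d
      using adm[OF that] by (simp add: abs_le_iff field_simps)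
    then have "\<bar>?b / ?a - 1\<bar> \<le> rip_const m n A l"
      unfolding rip_const_eq_Inf using rip_admissible_nonempty by (intro cInf_greatest) auto
    with \<open>?a > 0\<close> show ?thesis by (simp add: abs_le_iff field_simps)
  qed
  then show "(1 - rip_const m n A l) * ?a \<le> ?b" "?b \<le> (1 + rip_const m n A l) * ?a" by auto
qed

lemma rip_dotp_le_half_sum:
  assumes "card {j. j < n \<and> (u j \<noteq> 0 \<or> v j \<noteq> 0)} \<le> l"
  shows "\<bar>dotp m (mat_vec n A u) (mat_vec n A v) - dotp n u v\<bar>
          \<le> rip_const m n A l / 2 * (dotp n u u + dotp n v v)"
proof -
  have "sparse n l (\<lambda>j. u j + v j)" "sparse n l (\<lambda>j. u j - v j)"
    unfolding sparse_def by (auto intro: le_trans[OF card_mono assms])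
  from this[THEN rip_const_bounds(1), of m A] this[THEN rip_const_bounds(2), of m A]
  show ?thesis
    unfolding mat_vec_add mat_vec_diff dotp_add_self dotp_diff_self abs_le_iff
    by (simp add: ring_distribs)
qed

lemma rip_dotp_le:
  assumes "card {j. j < n \<and> (u j \<noteq> 0 \<or> v j \<noteq> 0)} \<le> l"
  shows "\<bar>dotp m (mat_vec n A u) (mat_vec n A v) - dotp n u v\<bar>
          \<le> rip_const m n A l * norm2 n u * norm2 n v"
proof (cases "norm2 n u = 0 \<or> norm2 n v = 0")
  case True
  then have "(\<forall>j<n. u j = 0) \<or> (\<forall>j<n. v j = 0)"
    by (simp add: norm2_eq_sqrt_dotp dotp_self_eq_0_iff)
  then have "dotp m (mat_vec n A u) (mat_vec n A v) = 0 \<and> dotp n u v = 0"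
    by (metis dotp_commute dotp_eq_0_if_left_0 mat_vec_eq_0)
  then show ?thesis
    using rip_const_nonneg[of m n A l] norm2_nonneg[of n u] norm2_nonneg[of n v] by simp
next
  case False
  define a b where "a = norm2 n u" and "b = norm2 n v"
  have "a > 0" "b > 0" using False norm2_nonneg unfolding a_def b_def by (simp_all add: less_le)
  \<comment> \<open>rescaling \<open>u\<close> by \<open>c\<close> and \<open>v\<close> by \<open>1/c\<close> balances the two squares
    of the polarization bound\<close>
  define c where "c = sqrt (b / a)"
  have "c > 0" and c2: "c\<^sup>2 = b / a" using \<open>a > 0\<close> \<open>b > 0\<close> by (simp_all add: c_def)
  have "{j. j < n \<and> (c * u j \<noteq> 0 \<or> 1 / c * v j \<noteq> 0)} = {j. j < n \<and> (u j \<noteq> 0 \<or> v j \<noteq> 0)}"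
    using \<open>c > 0\<close> by auto
  then have "\<bar>dotp m (mat_vec n A (\<lambda>j. c * u j)) (mat_vec n A (\<lambda>j. 1 / c * v j))
              - dotp n (\<lambda>j. c * u j) (\<lambda>j. 1 / c * v j)\<bar>
          \<le> rip_const m n A l / 2 * (dotp n (\<lambda>j. c * u j) (\<lambda>j. c * u j)
              + dotp n (\<lambda>j. 1 / c * v j) (\<lambda>j. 1 / c * v j))"
    using assms by (intro rip_dotp_le_half_sum) simp
  moreover have "dotp n (\<lambda>j. c * u j) (\<lambda>j. c * u j) = a * b"
    using \<open>a > 0\<close> c2 unfolding dotp_scale_left dotp_scale_right
    by (simp add: norm2_square[symmetric] a_def[symmetric] power2_eq_square field_simps)
  moreover have "dotp n (\<lambda>j. 1 / c * v j) (\<lambda>j. 1 / c * v j) = a * b"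
    using \<open>a > 0\<close> \<open>c > 0\<close> c2 unfolding dotp_scale_left dotp_scale_right
    by (simp add: norm2_square[symmetric] b_def[symmetric] power2_eq_square field_simps)
  ultimately show ?thesis
    using \<open>c > 0\<close> unfolding mat_vec_scale dotp_scale_left dotp_scale_right a_def b_def
    by simp
qed

lemma alpha_rip_nonneg: "rip_const m n A k < 1 \<Longrightarrow> 0 \<le> alpha_rip m n A k"
  unfolding alpha_rip_def by (simp add: rip_const_nonneg)

lemma gamma_rip_nonneg: "rip_const m n A k < 1 \<Longrightarrow> 0 \<le> gamma_rip m n A k"
  unfolding gamma_rip_def by (simp add: rip_const_nonneg)

lemma alpha_gamma_rip_combination:
  assumes "rip_const m n A k < 1"
  shows "rip_const m n A (2*k+1) * ((rip_const m n A (2*k) * a + sqrt (1 + rip_const m n A k) * b)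
           / (1 - rip_const m n A k) + a) + b
         = alpha_rip m n A k * a + gamma_rip m n A k * b"
proof -
  have "d * ((d' * a + s * b) / q + a) + b = d * (1 + d' / q) * a + (1 + d * s / q) * b"
    if "q \<noteq> 0" for d d' s q :: real
    using that by (simp add: field_simps)
  then show ?thesis using assms unfolding alpha_rip_def gamma_rip_def by simp
qed

section \<open>Linearly independent columns and the pseudoinverse\<close>

definition indep_cols :: "nat \<Rightarrow> nat set \<Rightarrow> (nat \<Rightarrow> nat \<Rightarrow> real) \<Rightarrow> bool" where
  "indep_cols m S A \<longleftrightarrow> (\<forall>w. (\<forall>r<m. (\<Sum>j\<in>S. A r j * w j) = 0) \<longrightarrow> (\<forall>j\<in>S. w j = 0))"

definition sym_left_inverse ::
    "nat \<Rightarrow> nat set \<Rightarrow> (nat \<Rightarrow> nat \<Rightarrow> real) \<Rightarrow> (nat \<Rightarrow> nat \<Rightarrow> real) \<Rightarrow> bool" where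
  "sym_left_inverse m S A X \<longleftrightarrow>
     (\<forall>i j. \<not> (i \<in> S \<and> j < m) \<longrightarrow> X i j = 0) \<and>
     (\<forall>i\<in>S. \<forall>j\<in>S. (\<Sum>r<m. X i r * A r j) = (if i = j then 1 else 0)) \<and>
     (\<forall>i<m. \<forall>j<m. (\<Sum>l\<in>S. A i l * X l j) = (\<Sum>l\<in>S. A j l * X l i))"

lemma sum_mult_sum_assoc:
  fixes f :: "'r \<Rightarrow> 'a::comm_semiring_0"
  shows "(\<Sum>l\<in>L. (\<Sum>r\<in>R. f r * g r l) * h l) = (\<Sum>r\<in>R. f r * (\<Sum>l\<in>L. g r l * h l))"
  by (simp add: sum_distrib_left sum_distrib_right mult.assoc sum.swap[of _ L])

lemma sum_delta_mult_left:
  "finite S \<Longrightarrow> i \<in> S \<Longrightarrow> (\<Sum>l\<in>S. (if i = l then 1 else 0) * (f l :: real)) = f i"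
  by (simp add: if_distrib[of "\<lambda>c. c * f _"] cong: if_cong)

lemma sum_delta_mult_right:
  "finite S \<Longrightarrow> j \<in> S \<Longrightarrow> (\<Sum>l\<in>S. (f l :: real) * (if l = j then 1 else 0)) = f j"
  by (simp add: if_distrib[of "\<lambda>c. f _ * c"] cong: if_cong)

lemma indep_cols_subset:
  assumes "indep_cols m S A" "T \<subseteq> S" "finite S"
  shows "indep_cols m T A"
  unfolding indep_cols_def
proof (intro allI impI)
  fix w assume "\<forall>r<m. (\<Sum>j\<in>T. A r j * w j) = 0"
  moreover have "(\<Sum>j\<in>S. A r j * (if j \<in> T then w j else 0)) = (\<Sum>j\<in>T. A r j * w j)" for r
    using assms(2,3) by (simp add: if_distrib sum.inter_restrict[symmetric] Int_absorb1 cong: if_cong)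
  ultimately have "\<forall>j\<in>S. (if j \<in> T then w j else 0) = 0"
    using assms(1) unfolding indep_cols_def by presburger
  then show "\<forall>j\<in>T. w j = 0" using assms(2) by (metis subsetD)
qed

lemma sym_left_inverse_penrose:
  assumes "sym_left_inverse m S A X" "finite S"
  shows "penrose m S A X"
proof -
  have left_inv: "(\<Sum>r<m. X i r * A r j) = (if i = j then 1 else 0)" if "i \<in> S" "j \<in> S" for i j
    using assms that unfolding sym_left_inverse_def by blast
  have "(\<Sum>l\<in>S. \<Sum>r<m. A i l * X l r * A r j) = A i j" if "j \<in> S" for i j
  proof -
    have "(\<Sum>l\<in>S. \<Sum>r<m. A i l * X l r * A r j) = (\<Sum>l\<in>S. A i l * (if l = j then 1 else 0))"
      using that by (intro sum.cong) (simp_all add: sum_distrib_left[symmetric] mult.assoc left_inv)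
    then show ?thesis using that assms(2) by (simp add: sum_delta_mult_right)
  qed
  moreover have "(\<Sum>r<m. \<Sum>l\<in>S. X i r * A r l * X l j) = X i j" if "i \<in> S" for i j
  proof -
    have "(\<Sum>r<m. \<Sum>l\<in>S. X i r * A r l * X l j) = (\<Sum>l\<in>S. (\<Sum>r<m. X i r * A r l) * X l j)"
      by (simp add: sum_distrib_right sum.swap[of _ S])
    also have "\<dots> = (\<Sum>l\<in>S. (if i = l then 1 else 0) * X l j)"
      using that by (simp add: left_inv)
    finally show ?thesis using that assms(2) by (simp add: sum_delta_mult_left)
  qed
  ultimately show ?thesis
    using assms(1) left_inv unfolding penrose_def sym_left_inverse_def by auto
qed

lemma penrose_proj_cols:
  assumes "penrose m S A X" "i < m" "j \<in> S"
  shows "(\<Sum>r<m. (\<Sum>l\<in>S. A i l * X l r) * A r j) = A i j"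
proof -
  have "(\<Sum>r<m. (\<Sum>l\<in>S. A i l * X l r) * A r j) = (\<Sum>l\<in>S. \<Sum>r<m. A i l * X l r * A r j)"
    by (simp add: sum_distrib_right sum.swap[of _ "{..<m}"])
  then show ?thesis using assms unfolding penrose_def by simp
qed

lemma penrose_left_inverse:
  assumes "penrose m S A X" "finite S" "indep_cols m S A" "i \<in> S" "j \<in> S"
  shows "(\<Sum>r<m. X i r * A r j) = (if i = j then 1 else 0)"
proof -
  define w where "w l = (\<Sum>r<m. X l r * A r j) - (if l = j then 1 else 0)" for l
  have "(\<Sum>l\<in>S. A q l * w l) = 0" if "q < m" for q
  proof -
    have "(\<Sum>l\<in>S. A q l * w l)
        = (\<Sum>l\<in>S. \<Sum>r<m. A q l * X l r * A r j) - (\<Sum>l\<in>S. A q l * (if l = j then 1 else 0))"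
      unfolding w_def by (simp add: right_diff_distrib sum_subtractf sum_distrib_left mult.assoc)
    then show ?thesis using assms that unfolding penrose_def by (simp add: sum_delta_mult_right)
  qed
  then have "w i = 0" using assms(3,4) unfolding indep_cols_def by blast
  then show ?thesis unfolding w_def by simp
qed

lemma penrose_unique:
  assumes X: "penrose m S A X" and Y: "penrose m S A Y" and "finite S" "indep_cols m S A"
  shows "X = Y"
proof -
  define P where "P i j = (\<Sum>l\<in>S. A i l * X l j)" for i j
  define Q where "Q i j = (\<Sum>l\<in>S. A i l * Y l j)" for i j
  have P_sym: "P i j = P j i" and Q_sym: "Q i j = Q j i" if "i < m" "j < m" for i j
    using X Y that unfolding penrose_def P_def Q_def by blast+
  \<comment> \<open>the two orthogonal projections onto the column space coincide\<close>
  have PQ: "P i j = Q i j" if "i < m" "j < m" for i j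
  proof -
    have "P i j = (\<Sum>l\<in>S. (\<Sum>r<m. Q i r * A r l) * X l j)"
      unfolding P_def Q_def using penrose_proj_cols[OF Y \<open>i < m\<close>] by simp
    also have "\<dots> = (\<Sum>r<m. Q i r * P r j)"
      unfolding P_def by (rule sum_mult_sum_assoc)
    also have "\<dots> = (\<Sum>r<m. P j r * Q r i)"
      using that by (intro sum.cong) (simp_all add: P_sym Q_sym mult.commute)
    also have "\<dots> = (\<Sum>l\<in>S. (\<Sum>r<m. P j r * A r l) * Y l i)"
      unfolding Q_def by (rule sum_mult_sum_assoc[symmetric])
    also have "\<dots> = Q j i"
      unfolding P_def Q_def using penrose_proj_cols[OF X \<open>j < m\<close>] by simp
    finally show ?thesis using Q_sym[OF that(2,1)] by simp
  qed
  have factor: "Z i j = (\<Sum>r<m. X i r * (\<Sum>l\<in>S. A r l * Z l j))"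
    if "penrose m S A Z" "i \<in> S" for Z i j
  proof -
    have "Z i j = (\<Sum>l\<in>S. (if i = l then 1 else 0) * Z l j)"
      using that \<open>finite S\<close> by (simp add: sum_delta_mult_left)
    also have "\<dots> = (\<Sum>l\<in>S. (\<Sum>r<m. X i r * A r l) * Z l j)"
      using penrose_left_inverse[OF X \<open>finite S\<close> \<open>indep_cols m S A\<close> \<open>i \<in> S\<close>] by simp
    also have "\<dots> = (\<Sum>r<m. X i r * (\<Sum>l\<in>S. A r l * Z l j))"
      by (rule sum_mult_sum_assoc)
    finally show ?thesis .
  qed
  show ?thesis
  proof (intro ext)
    fix i j
    show "X i j = Y i j"
    proof (cases "i \<in> S \<and> j < m")
      case True
      have "X i j = (\<Sum>r<m. X i r * P r j)" unfolding P_def using factor[OF X] True by blast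
      also have "\<dots> = (\<Sum>r<m. X i r * Q r j)" using PQ True by simp
      also have "\<dots> = Y i j" unfolding Q_def using factor[OF Y] True by simp
      finally show ?thesis .
    next
      case False
      then show ?thesis using X Y by (simp add: penrose_def)
    qed
  qed
qed

lemma penrose_residual_orthogonal:
  assumes X: "penrose m S A X" and "j \<in> S"
  shows "(\<Sum>r<m. (a r - (\<Sum>l\<in>S. A r l * (\<Sum>q<m. X l q * a q))) * A r j) = 0"
proof -
  define P where "P i q = (\<Sum>l\<in>S. A i l * X l q)" for i q
  have P_sym: "P i q = P q i" if "i < m" "q < m" for i q
    using X that unfolding penrose_def P_def by blast
  have "(\<Sum>r<m. (\<Sum>l\<in>S. A r l * (\<Sum>q<m. X l q * a q)) * A r j)
      = (\<Sum>r<m. (\<Sum>q<m. P r q * a q) * A r j)"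
    unfolding P_def by (simp add: sum_mult_sum_assoc)
  also have "\<dots> = (\<Sum>r<m. \<Sum>q<m. a q * (P q r * A r j))"
    unfolding sum_distrib_right
    by (intro sum.cong refl) (use P_sym in \<open>auto simp: mult_ac\<close>)
  also have "\<dots> = (\<Sum>q<m. a q * (\<Sum>r<m. P q r * A r j))"
    by (subst sum.swap) (simp add: sum_distrib_left)
  also have "\<dots> = (\<Sum>q<m. a q * A q j)"
    unfolding P_def using penrose_proj_cols[OF X _ \<open>j \<in> S\<close>] by simp
  finally show ?thesis by (simp add: left_diff_distrib sum_subtractf)
qed

lemma penrose_residual_self:
  fixes a :: "nat \<Rightarrow> real"
  assumes X: "penrose m S A X"
  defines "w \<equiv> \<lambda>r. a r - (\<Sum>l\<in>S. A r l * (\<Sum>q<m. X l q * a q))"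
  shows "(\<Sum>r<m. w r * a r) = (\<Sum>r<m. w r * w r)"
proof -
  define c where "c l = (\<Sum>q<m. X l q * a q)" for l
  have "(\<Sum>r<m. w r * (\<Sum>l\<in>S. A r l * c l)) = (\<Sum>l\<in>S. (\<Sum>r<m. w r * A r l) * c l)"
    by (rule sum_mult_sum_assoc[symmetric])
  also have "\<dots> = 0"
    using penrose_residual_orthogonal[OF X] unfolding w_def c_def by (simp add: mult.commute)
  finally have "(\<Sum>r<m. w r * (\<Sum>l\<in>S. A r l * c l)) = 0" .
  moreover have "w r * a r = w r * w r + w r * (\<Sum>l\<in>S. A r l * c l)" for r
    unfolding w_def c_def by (simp add: algebra_simps)
  ultimately show ?thesis by (simp add: sum.distrib)
qed

lemma indep_cols_insert_not_combination:
  assumes "indep_cols m (insert a S) A" "finite S" "a \<notin> S"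
  shows "\<exists>r<m. A r a \<noteq> (\<Sum>l\<in>S. A r l * c l)"
proof (rule ccontr)
  assume "\<not> ?thesis"
  moreover have "(\<Sum>j\<in>insert a S. A r j * (if j = a then 1 else - c j))
      = A r a - (\<Sum>l\<in>S. A r l * c l)" for r
  proof -
    have "(\<Sum>j\<in>S. A r j * (if j = a then 1 else - c j)) = - (\<Sum>j\<in>S. A r j * c j)"
      using \<open>a \<notin> S\<close> by (auto simp: sum_negf[symmetric] intro: sum.cong)
    then show ?thesis using \<open>finite S\<close> \<open>a \<notin> S\<close> by simp
  qed
  ultimately have "(\<Sum>j\<in>insert a S. A r j * (if j = a then 1 else - c j)) = 0" if "r < m" for r
    using that by simp
  from assms(1)[unfolded indep_cols_def, rule_format, OF this, of a] show False by simp
qed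

lemma sym_left_inverse_insert:
  assumes X: "sym_left_inverse m S A X" and "finite S" "a \<notin> S"
    and indep: "indep_cols m (insert a S) A"
  shows "\<exists>X'. sym_left_inverse m (insert a S) A X'"
proof -
  have pX: "penrose m S A X" using sym_left_inverse_penrose[OF X \<open>finite S\<close>] .
  have X_sym: "(\<Sum>l\<in>S. A i l * X l j) = (\<Sum>l\<in>S. A j l * X l i)" if "i < m" "j < m" for i j
    using X that unfolding sym_left_inverse_def by blast
  have X_left_inv: "(\<Sum>r<m. X i r * A r j) = (if i = j then 1 else 0)" if "i \<in> S" "j \<in> S" for i j
    using X that unfolding sym_left_inverse_def by blast
  \<comment> \<open>Gram--Schmidt step: \<open>w\<close> is the component of column \<open>a\<close> orthogonal to the
    columns in \<open>S\<close>\<close>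
  define c where "c l = (\<Sum>q<m. X l q * A q a)" for l
  define w where "w r = A r a - (\<Sum>l\<in>S. A r l * c l)" for r
  define nw where "nw = (\<Sum>r<m. w r * w r)"
  have w_orth: "(\<Sum>r<m. w r * A r j) = 0" if "j \<in> S" for j
    using penrose_residual_orthogonal[OF pX that] unfolding w_def c_def .
  have w_col: "(\<Sum>r<m. w r * A r a) = nw"
    using penrose_residual_self[OF pX, of "\<lambda>r. A r a"] unfolding nw_def w_def c_def .
  obtain r where "r < m" "w r \<noteq> 0"
    using indep_cols_insert_not_combination[OF indep \<open>finite S\<close> \<open>a \<notin> S\<close>] unfolding w_def by auto
  then have "nw > 0"
    unfolding nw_def by (intro sum_pos2[of _ r]) (auto simp: zero_less_mult_iff linorder_neq_iff)
  define X' where "X' i q = (if q < m then (if i = a then w q / nw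
                     else if i \<in> S then X i q - c i * w q / nw else 0) else 0)" for i q
  have "(\<Sum>r<m. X' i r * A r j) = (if i = j then 1 else 0)"
    if "i \<in> insert a S" "j \<in> insert a S" for i j
  proof (cases "i = a")
    case True
    then have "(\<Sum>r<m. X' i r * A r j) = (\<Sum>r<m. w r * A r j) / nw"
      unfolding X'_def by (simp add: sum_divide_distrib)
    then show ?thesis using that True w_orth w_col \<open>nw > 0\<close> \<open>a \<notin> S\<close> by auto
  next
    case False
    then have "i \<in> S" using that by simp
    then have "(\<Sum>r<m. X' i r * A r j) = (\<Sum>r<m. X i r * A r j - c i / nw * (w r * A r j))"
      unfolding X'_def using False by (intro sum.cong) (auto simp: algebra_simps)
    also have "\<dots> = (\<Sum>r<m. X i r * A r j) - c i / nw * (\<Sum>r<m. w r * A r j)"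
      by (simp add: sum_subtractf sum_distrib_left)
    finally show ?thesis
      using that False \<open>i \<in> S\<close> w_orth w_col \<open>nw > 0\<close> X_left_inv by (auto simp: c_def)
  qed
  moreover have "(\<Sum>l\<in>insert a S. A i l * X' l j) = (\<Sum>l\<in>S. A i l * X l j) + w i * w j / nw"
    if "i < m" "j < m" for i j
  proof -
    have "(\<Sum>l\<in>S. A i l * X' l j) = (\<Sum>l\<in>S. A i l * X l j - w j / nw * (A i l * c l))"
      unfolding X'_def using \<open>a \<notin> S\<close> that by (intro sum.cong) (auto simp: algebra_simps)
    also have "\<dots> = (\<Sum>l\<in>S. A i l * X l j) - w j / nw * (\<Sum>l\<in>S. A i l * c l)"
      by (simp add: sum_subtractf sum_distrib_left)
    finally have "(\<Sum>l\<in>S. A i l * X' l j) = \<dots>" .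
    moreover have "X' a j = w j / nw" using that by (simp add: X'_def)
    ultimately show ?thesis
      using \<open>finite S\<close> \<open>a \<notin> S\<close> by (simp add: w_def[of i] algebra_simps diff_divide_distrib)
  qed
  ultimately have "sym_left_inverse m (insert a S) A X'"
    using X_sym unfolding sym_left_inverse_def by (auto simp: X'_def mult.commute)
  then show ?thesis by blast
qed

lemma sym_left_inverse_exists:
  assumes "finite S" "indep_cols m S A"
  shows "\<exists>X. sym_left_inverse m S A X"
  using assms
proof (induction S rule: finite_induct)
  case empty
  show ?case by (rule exI[of _ "\<lambda>i j. 0"]) (simp add: sym_left_inverse_def)
next
  case (insert a S)
  then show ?case
    using indep_cols_subset[of m "insert a S" A S] sym_left_inverse_insert by blast
qed

lemma pinv_penrose:
  assumes "finite S" "indep_cols m S A"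
  shows "penrose m S A (pinv m S A)"
proof -
  obtain X where X: "penrose m S A X"
    using sym_left_inverse_exists sym_left_inverse_penrose assms by blast
  show ?thesis
    unfolding pinv_def by (rule theI[of _ X]) (use X penrose_unique assms in blast)+
qed

section \<open>Least squares on a support estimate\<close>

lemma mat_vec_ls_on:
  assumes "S \<subseteq> {..<n}"
  shows "mat_vec n A (ls_on m A S y) r = (\<Sum>q<m. (\<Sum>l\<in>S. A r l * pinv m S A l q) * y q)"
proof -
  have "mat_vec n A (ls_on m A S y) r = (\<Sum>l\<in>S. A r l * ls_on m A S y l)"
    unfolding mat_vec_def using assms by (intro sum.mono_neutral_right) (auto simp: ls_on_def)
  also have "\<dots> = (\<Sum>l\<in>S. A r l * (\<Sum>q<m. pinv m S A l q * y q))"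
    by (simp add: ls_on_def)
  finally show ?thesis by (simp add: sum_mult_sum_assoc)
qed

lemma ls_on_normal_equation:
  assumes "finite S" "S \<subseteq> {..<n}" "indep_cols m S A" "j \<in> S"
  shows "tmat_vec m A (\<lambda>r. mat_vec n A (ls_on m A S y) r - y r) j = 0"
proof -
  define P where "P r q = (\<Sum>l\<in>S. A r l * pinv m S A l q)" for r q
  have X: "penrose m S A (pinv m S A)" using pinv_penrose assms(1,3) .
  have "(\<Sum>r<m. A r j * P r q) = A q j" if "q < m" for q
  proof -
    have "(\<Sum>r<m. A r j * P r q) = (\<Sum>r<m. P q r * A r j)"
      using X that unfolding penrose_def P_def by (intro sum.cong) (simp_all add: mult.commute)
    then show ?thesis unfolding P_def using penrose_proj_cols[OF X that assms(4)] by simp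
  qed
  then have "(\<Sum>r<m. A r j * mat_vec n A (ls_on m A S y) r) = (\<Sum>q<m. A q j * y q)"
    unfolding mat_vec_ls_on[OF assms(2)] P_def[symmetric] by (simp add: sum_mult_sum_assoc[symmetric])
  then show ?thesis unfolding tmat_vec_def by (simp add: right_diff_distrib sum_subtractf)
qed

lemma ls_on_residual_orthogonal:
  assumes "finite S" "S \<subseteq> {..<n}" "indep_cols m S A" "\<forall>j. j \<notin> S \<longrightarrow> v j = 0"
  shows "dotp m (mat_vec n A v) (\<lambda>r. mat_vec n A (ls_on m A S y) r - y r) = 0"
proof -
  have "v j * tmat_vec m A (\<lambda>r. mat_vec n A (ls_on m A S y) r - y r) j = 0" for j
    using ls_on_normal_equation[OF assms(1-3), of j y] assms(4) by (cases "j \<in> S") auto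
  then show ?thesis unfolding dotp_mat_vec_left unfolding dotp_def by (intro sum.neutral) blast
qed

lemma rip_indep_cols:
  assumes "S \<subseteq> {..<n}" "card S \<le> l" "rip_const m n A l < 1"
  shows "indep_cols m S A"
  unfolding indep_cols_def
proof (intro allI impI)
  fix w assume w: "\<forall>r<m. (\<Sum>j\<in>S. A r j * w j) = 0"
  define w' where "w' j = (if j \<in> S then w j else 0)" for j
  have "finite S" using assms(1) finite_subset by blast
  have "mat_vec n A w' r = (\<Sum>j\<in>S. A r j * w j)" for r
    unfolding mat_vec_def w'_def using assms(1)
    by (simp add: if_distrib[of "\<lambda>c. _ * c"] sum.inter_restrict[symmetric] Int_absorb1 cong: if_cong)
  then have "dotp m (mat_vec n A w') (mat_vec n A w') = 0"
    using w by (simp add: dotp_def)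
  moreover have "sparse n l w'"
    using \<open>finite S\<close> assms(2) by (intro sparse_if_support) (auto simp: w'_def)
  ultimately have "(1 - rip_const m n A l) * dotp n w' w' \<le> 0"
    using rip_const_bounds(1) by metis
  then have "dotp n w' w' = 0"
    using assms(3) dotp_self_nonneg[of n w'] by (simp add: mult_le_0_iff)
  then show "\<forall>j\<in>S. w j = 0"
    using assms(1) unfolding dotp_self_eq_0_iff w'_def by auto
qed

lemma residual_split:
  assumes "\<forall>j. j \<notin> S \<longrightarrow> x j = 0" "y = (\<lambda>i. mat_vec n A xs i + e i)"
  shows "mat_vec n A x r - y r
       = mat_vec n A (\<lambda>j. if j \<in> S then x j - xs j else 0) r
         - mat_vec n A (\<lambda>j. if j \<in> S then 0 else xs j) r - e r"
proof -
  have "(\<lambda>j. x j - xs j) = (\<lambda>j. (if j \<in> S then x j - xs j else 0) - (if j \<in> S then 0 else xs j))"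
    using assms(1) by auto
  then have "mat_vec n A x r - mat_vec n A xs r
      = mat_vec n A (\<lambda>j. if j \<in> S then x j - xs j else 0) r
        - mat_vec n A (\<lambda>j. if j \<in> S then 0 else xs j) r"
    by (metis mat_vec_diff)
  then show ?thesis using assms(2) by simp
qed

lemma ls_on_error_le:
  assumes S: "S \<subseteq> {..<n}" "card S \<le> k" and rip: "rip_const m n A k < 1"
    and xs: "\<forall>i\<ge>n. xs i = 0" "card {i. xs i \<noteq> 0} \<le> k"
    and y: "y = (\<lambda>i. mat_vec n A xs i + e i)"
  defines "w \<equiv> \<lambda>j. if j \<in> S then ls_on m A S y j - xs j else 0"
    and "z \<equiv> \<lambda>j. if j \<in> S then 0 else xs j"
  shows "norm2 n w \<le> (rip_const m n A (2*k) * norm2 n z + sqrt (1 + rip_const m n A k) * norm2 m e)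
                      / (1 - rip_const m n A k)"
proof -
  define res where "res r = mat_vec n A (ls_on m A S y) r - y r" for r
  let ?Aw = "mat_vec n A w" and ?Az = "mat_vec n A z"
  let ?dk = "rip_const m n A k" and ?d2k = "rip_const m n A (2*k)"
  have "finite S" using S(1) finite_subset by blast
  have "finite {i. xs i \<noteq> 0}" using xs(1) by (rule finite_nonzero_if_zero_beyond)
  have "\<forall>j. j \<notin> S \<longrightarrow> ls_on m A S y j = 0" by (simp add: ls_on_def)
  from residual_split[OF this y] have res_eq: "res = (\<lambda>r. ?Aw r - ?Az r - e r)"
    unfolding res_def w_def z_def by (intro ext)
  have "dotp m ?Aw res = 0"
    using ls_on_residual_orthogonal[OF \<open>finite S\<close> S(1) rip_indep_cols[OF S rip]]
    unfolding res_def by (simp add: w_def)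
  moreover have "dotp m res ?Aw = dotp m ?Aw ?Aw - dotp m ?Az ?Aw - dotp m e ?Aw"
    unfolding res_eq dotp_diff_left ..
  ultimately have Aw_Aw: "dotp m ?Aw ?Aw = dotp m ?Aw ?Az + dotp m ?Aw e"
    by (simp add: dotp_commute)
  have w_sparse: "sparse n k w"
    using \<open>finite S\<close> S(2) by (intro sparse_if_support) (auto simp: w_def)
  have "\<forall>j. j \<notin> S \<longrightarrow> w j = 0" "\<forall>j. j \<notin> {i. xs i \<noteq> 0} \<longrightarrow> z j = 0"
    by (simp_all add: w_def z_def)
  from card_joint_support_le[OF \<open>finite S\<close> \<open>finite {i. xs i \<noteq> 0}\<close> this, of n]
  have "card {j. j < n \<and> (w j \<noteq> 0 \<or> z j \<noteq> 0)} \<le> 2 * k" using S(2) xs(2) by linarith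
  moreover have "dotp n w z = 0" unfolding dotp_def w_def z_def by (simp add: sum.neutral)
  ultimately have Aw_Az: "\<bar>dotp m ?Aw ?Az\<bar> \<le> ?d2k * norm2 n w * norm2 n z"
    using rip_dotp_le[of n w z "2*k" m A] by simp
  have "norm2 m ?Aw \<le> sqrt (1 + ?dk) * norm2 n w"
    using rip_const_bounds(2)[OF w_sparse, of m A]
    by (simp add: norm2_eq_sqrt_dotp real_sqrt_mult[symmetric])
  then have Aw_e: "\<bar>dotp m ?Aw e\<bar> \<le> sqrt (1 + ?dk) * norm2 n w * norm2 m e"
    using abs_dotp_le_norm2[of m ?Aw e] norm2_nonneg[of m e] by (meson mult_right_mono order_trans)
  have "(1 - ?dk) * (norm2 n w)\<^sup>2 \<le> dotp m ?Aw ?Aw"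
    using rip_const_bounds(1)[OF w_sparse, of m A] by (simp add: norm2_square)
  also have "\<dots> \<le> (?d2k * norm2 n z + sqrt (1 + ?dk) * norm2 m e) * norm2 n w"
    using Aw_Aw Aw_Az Aw_e by (simp add: algebra_simps)
  finally have "(1 - ?dk) * norm2 n w * norm2 n w
      \<le> (?d2k * norm2 n z + sqrt (1 + ?dk) * norm2 m e) * norm2 n w"
    by (simp add: power2_eq_square)
  moreover have "0 \<le> ?d2k * norm2 n z + sqrt (1 + ?dk) * norm2 m e"
    using rip_const_nonneg norm2_nonneg by simp
  ultimately have "(1 - ?dk) * norm2 n w \<le> ?d2k * norm2 n z + sqrt (1 + ?dk) * norm2 m e"
    using norm2_nonneg[of n w] by (cases "norm2 n w = 0") (simp_all add: rip)
  then show ?thesis using rip by (simp add: field_simps)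
qed

lemma gradient_entry_off_support_le:
  assumes S: "finite S" "card S \<le> k" and x: "\<forall>j. j \<notin> S \<longrightarrow> x j = 0"
    and i: "i < n" "i \<notin> S" and col: "norm2 m (\<lambda>r. A r i) = 1"
    and xs: "finite {j. xs j \<noteq> 0}" "card {j. xs j \<noteq> 0} \<le> k"
    and y: "y = (\<lambda>i. mat_vec n A xs i + e i)"
  defines "w \<equiv> \<lambda>j. if j \<in> S then x j - xs j else 0"
    and "z \<equiv> \<lambda>j. if j \<in> S then 0 else xs j"
  shows "\<bar>xs i + tmat_vec m A (\<lambda>r. mat_vec n A x r - y r) i\<bar>
           \<le> rip_const m n A (2*k+1) * (norm2 n w + norm2 n z) + norm2 m e"
proof -
  define E where "E j = (if j = i then 1 else 0 :: real)" for j
  let ?AE = "mat_vec n A E" and ?\<delta> = "rip_const m n A (2*k+1)"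
  have AE: "?AE = (\<lambda>r. A r i)"
    unfolding mat_vec_def E_def using i(1) by (simp add: if_distrib[of "\<lambda>c. _ * c"] cong: if_cong)
  have dotp_E: "dotp n E v = v i" for v
    unfolding dotp_def E_def using i(1) by (simp add: if_distrib[of "\<lambda>c. c * _"] cong: if_cong)
  have "norm2 n E = 1" unfolding norm2_eq_sqrt_dotp dotp_E by (simp add: E_def)
  have supp_E: "\<forall>j. j \<notin> {i} \<longrightarrow> E j = 0" by (simp add: E_def)
  have "card {j. j < n \<and> (E j \<noteq> 0 \<or> w j \<noteq> 0)} \<le> card {i} + card S"
    using S(1) supp_E by (intro card_joint_support_le) (simp_all add: w_def)
  moreover have "card {j. j < n \<and> (E j \<noteq> 0 \<or> z j \<noteq> 0)} \<le> card {i} + card {j. xs j \<noteq> 0}"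
    using xs(1) supp_E by (intro card_joint_support_le) (simp_all add: z_def)
  ultimately have "card {j. j < n \<and> (E j \<noteq> 0 \<or> w j \<noteq> 0)} \<le> 2*k+1"
    "card {j. j < n \<and> (E j \<noteq> 0 \<or> z j \<noteq> 0)} \<le> 2*k+1"
    using S(2) xs(2) by simp_all
  from this[THEN rip_dotp_le, of m A]
  have Aw: "\<bar>dotp m ?AE (mat_vec n A w)\<bar> \<le> ?\<delta> * norm2 n w"
    and Az: "\<bar>dotp m ?AE (mat_vec n A z) - xs i\<bar> \<le> ?\<delta> * norm2 n z"
    using \<open>norm2 n E = 1\<close> i(2) by (simp_all add: dotp_E w_def z_def)
  have Ae: "\<bar>dotp m ?AE e\<bar> \<le> norm2 m e"
    using abs_dotp_le_norm2[of m ?AE e] col unfolding AE by simp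
  have "tmat_vec m A (\<lambda>r. mat_vec n A x r - y r) i
      = dotp m ?AE (mat_vec n A w) - dotp m ?AE (mat_vec n A z) - dotp m ?AE e"
    unfolding residual_split[OF x y] w_def[symmetric] z_def[symmetric]
    by (simp add: AE tmat_vec_def dotp_def algebra_simps sum_subtractf sum.distrib)
  then show ?thesis using Aw Az Ae by (simp add: distrib_left abs_le_iff)
qed

lemma oracle_gradient_entry_le:
  assumes S: "S \<subseteq> {..<n}" "card S \<le> k" and rip: "rip_const m n A (2*k+1) < 1"
    and cols: "\<forall>j<n. norm2 m (\<lambda>r. A r j) = 1"
    and xs: "\<forall>i\<ge>n. xs i = 0" "card {i. xs i \<noteq> 0} \<le> k"
    and y: "y = (\<lambda>i. mat_vec n A xs i + e i)" and "\<eta> > 0" and "i < n"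
  shows "\<bar>oracle_u \<eta> xs S i / \<eta> - tmat_vec m A (\<lambda>r. mat_vec n A (ls_on m A S y) r - y r) i\<bar>
           \<le> alpha_rip m n A k * norm2 n xs + gamma_rip m n A k * norm2 m e"
proof -
  let ?x = "ls_on m A S y" and ?\<delta> = "rip_const m n A (2*k+1)"
  let ?dk = "rip_const m n A k" and ?d2k = "rip_const m n A (2*k)"
  have "?dk < 1" using rip rip_const_mono[of k "2*k+1" m n A] by linarith
  have "finite S" using S(1) finite_subset by blast
  show ?thesis
  proof (cases "i \<in> S")
    case True
    have "tmat_vec m A (\<lambda>r. mat_vec n A ?x r - y r) i = 0"
      using ls_on_normal_equation[OF \<open>finite S\<close> S(1) rip_indep_cols[OF S(1) _ rip] True] S(2)
      by simp
    then show ?thesis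
      using True alpha_rip_nonneg[OF \<open>?dk < 1\<close>] gamma_rip_nonneg[OF \<open>?dk < 1\<close>]
      by (simp add: oracle_u_def norm2_nonneg)
  next
    case False
    define w where "w = (\<lambda>j. if j \<in> S then ?x j - xs j else 0)"
    define z where "z = (\<lambda>j. if j \<in> S then 0 else xs j)"
    have "\<forall>j. j \<notin> S \<longrightarrow> ?x j = 0" by (simp add: ls_on_def)
    from gradient_entry_off_support_le[OF \<open>finite S\<close> S(2) this \<open>i < n\<close> False _
        finite_nonzero_if_zero_beyond[OF xs(1)] xs(2) y]
    have "\<bar>xs i + tmat_vec m A (\<lambda>r. mat_vec n A ?x r - y r) i\<bar>
        \<le> ?\<delta> * (norm2 n w + norm2 n z) + norm2 m e"
      using cols \<open>i < n\<close> unfolding w_def z_def by blast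
    also have "\<dots> \<le> ?\<delta> * ((?d2k * norm2 n z + sqrt (1 + ?dk) * norm2 m e) / (1 - ?dk) + norm2 n z)
                   + norm2 m e"
      using ls_on_error_le[OF S \<open>?dk < 1\<close> xs y] rip_const_nonneg[of m n A "2*k+1"]
      unfolding w_def z_def by (intro add_right_mono mult_left_mono) simp_all
    also have "\<dots> = alpha_rip m n A k * norm2 n z + gamma_rip m n A k * norm2 m e"
      using alpha_gamma_rip_combination[OF \<open>?dk < 1\<close>] .
    also have "\<dots> \<le> alpha_rip m n A k * norm2 n xs + gamma_rip m n A k * norm2 m e"
      using alpha_rip_nonneg[OF \<open>?dk < 1\<close>] by (simp add: mult_left_mono norm2_mono z_def)
    finally have "\<bar>xs i + tmat_vec m A (\<lambda>r. mat_vec n A ?x r - y r) i\<bar>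
        \<le> alpha_rip m n A k * norm2 n xs + gamma_rip m n A k * norm2 m e" .
    moreover have "oracle_u \<eta> xs S i / \<eta> = - xs i"
      using False \<open>\<eta> > 0\<close> by (simp add: oracle_u_def)
    ultimately show ?thesis by arith
  qed
qed

lemma largest_subset: "largest n k v \<subseteq> {..<n}"
  unfolding largest_def by auto

lemma card_largest_le: "card (largest n k v) \<le> k"
proof -
  define before where "before j i \<longleftrightarrow> \<bar>v j\<bar> > \<bar>v i\<bar> \<or> (\<bar>v j\<bar> = \<bar>v i\<bar> \<and> j > i)" for j i
  define rank where "rank i = card {j. j < n \<and> before j i}" for i
  have largest_eq: "largest n k v = {i. i < n \<and> rank i < k}"
    unfolding largest_def rank_def before_def by simp
  have rank_less: "rank i < rank i'" if "before i i'" "i < n" for i i'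
  proof -
    have "{j. j < n \<and> before j i} \<subset> {j. j < n \<and> before j i'}"
      using that unfolding before_def by auto
    then show ?thesis unfolding rank_def by (intro psubset_card_mono) auto
  qed
  have "inj_on rank (largest n k v)"
  proof (rule inj_onI)
    fix i i' assume "i \<in> largest n k v" "i' \<in> largest n k v" "rank i = rank i'"
    moreover have "i = i' \<or> before i i' \<or> before i' i" unfolding before_def by auto
    ultimately show "i = i'" using rank_less unfolding largest_eq by fastforce
  qed
  then have "card (largest n k v) \<le> card {..<k}"
    by (rule card_inj_on_le) (auto simp: largest_eq)
  then show ?thesis by simp
qed

theorem lemmaC11:
  fixes m n k :: nat and A :: "nat \<Rightarrow> nat \<Rightarrow> real" and xs e y X0 :: "nat \<Rightarrow> real"
    and \<eta> :: real and t :: nat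
  assumes "m > 0" "n > 0" "k > 0" "2*k+1 \<le> n"
    and "rip_const m n A (2*k+1) < 1"
    and "\<forall>j<n. norm2 m (\<lambda>i. A i j) = 1"
    and "\<forall>i\<ge>n. xs i = 0"
    and "card {i. xs i \<noteq> 0} \<le> k"
    and "y = (\<lambda>i. mat_vec n A xs i + e i)"
    and "\<eta> > 0"
  shows "let X = sea_X m n A k y X0 \<eta> t; St = sea_S n k X; x = sea_x m n A k y X;
             g = tmat_vec m A (\<lambda>i. mat_vec n A x i - y i);
             u = oracle_u \<eta> xs St;
             b = (\<lambda>i. u i - \<eta> * g i)
         in norm_inf n (\<lambda>i. u i / \<eta> - g i) = (1 / \<eta>) * norm_inf n b \<and>
            (1 / \<eta>) * norm_inf n b \<le> alpha_rip m n A k * norm2 n xs + gamma_rip m n A k * norm2 m e"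
proof -
  define X where "X = sea_X m n A k y X0 \<eta> t"
  define S where "S = sea_S n k X"
  define g where "g = tmat_vec m A (\<lambda>i. mat_vec n A (sea_x m n A k y X) i - y i)"
  define u where "u = oracle_u \<eta> xs S"
  have "S \<subseteq> {..<n}" "card S \<le> k"
    unfolding S_def sea_S_def by (simp_all add: largest_subset card_largest_le)
  then have entry:
    "\<bar>u i / \<eta> - g i\<bar> \<le> alpha_rip m n A k * norm2 n xs + gamma_rip m n A k * norm2 m e"
    if "i < n" for i
    unfolding u_def g_def sea_x_def S_def[symmetric]
    using oracle_gradient_entry_le assms that by blast
  have "(\<lambda>i. u i - \<eta> * g i) = (\<lambda>i. \<eta> * (u i / \<eta> - g i))"
    using \<open>\<eta> > 0\<close> by (simp add: right_diff_distrib)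
  then have "norm_inf n (\<lambda>i. u i / \<eta> - g i) = 1 / \<eta> * norm_inf n (\<lambda>i. u i - \<eta> * g i)"
    using \<open>n > 0\<close> \<open>\<eta> > 0\<close> by (simp add: norm_inf_scale)
  moreover have
    "norm_inf n (\<lambda>i. u i / \<eta> - g i) \<le> alpha_rip m n A k * norm2 n xs + gamma_rip m n A k * norm2 m e"
    using \<open>n > 0\<close> entry by (simp add: norm_inf_le)
  ultimately show ?thesis
    unfolding Let_def X_def[symmetric] S_def[symmetric] g_def[symmetric] u_def[symmetric] by simp
qed

end
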